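(* Let $F\subseteq\mathbb{R}$ be a countable subfield of $\mathbb{R}$ that is closed under Turing equivalence. Then there is a set $\mathcal{C}$ of Turing degrees, linearly ordered by $\le_T$, such that $F=\mathbb{R}_{\wedge\mathcal{C}}$, the set of all reals computable from some real whose degree lies in $\mathcal{C}$.
   Context: A set of reals is closed under Turing equivalence if it contains every real Turing equivalent to one of its elements. *)

theory Defs
  imports Complex_Main "HOL-Library.Nat_Bijection" "HOL-Library.Countable_Set"
begin

inductive rec_in :: "(nat \<Rightarrow> nat) \<Rightarrow> nat \<Rightarrow> (nat list \<Rightarrow> nat) \<Rightarrow> bool"
  for g :: "nat \<Rightarrow> nat" where
  r_zero: "rec_in g n (\<lambda>xs. 0)"
| r_succ: "rec_in g 1 (\<lambda>xs. Suc (hd xs))"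
| r_proj: "i < n \<Longrightarrow> rec_in g n (\<lambda>xs. xs ! i)"
| r_oracle: "rec_in g 1 (\<lambda>xs. g (hd xs))"
| r_comp: "rec_in g m h \<Longrightarrow> length fs = m \<Longrightarrow> (\<forall>f\<in>set fs. rec_in g n f)
    \<Longrightarrow> rec_in g n (\<lambda>xs. h (map (\<lambda>f. f xs) fs))"
| r_prim: "rec_in g n b \<Longrightarrow> rec_in g (Suc (Suc n)) s
    \<Longrightarrow> rec_in g (Suc n) (\<lambda>xs. rec_nat (b (tl xs)) (\<lambda>k acc. s (k # acc # tl xs)) (hd xs))"
| r_min: "rec_in g (Suc n) p \<Longrightarrow> (\<forall>xs. length xs = n \<longrightarrow> (\<exists>y. p (y # xs) = 0))
    \<Longrightarrow> rec_in g n (\<lambda>xs. LEAST y. p (y # xs) = 0)"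
| r_ext: "rec_in g n f \<Longrightarrow> (\<forall>xs. length xs = n \<longrightarrow> f xs = f' xs) \<Longrightarrow> rec_in g n f'"

definition turing_le_set :: "nat set \<Rightarrow> nat set \<Rightarrow> bool" where
  "turing_le_set A B \<longleftrightarrow> rec_in (\<lambda>k. of_bool (k \<in> B)) 1 (\<lambda>xs. of_bool (hd xs \<in> A))"

text \<open>Left Dedekind cut of a real, coded as a set of naturals: n codes the rational
 (a - b)/(c + 1) via Cantor pairing n = <a, <b, c>>.\<close>
definition rat_code :: "nat \<Rightarrow> real" where
  "rat_code n = (case prod_decode n of (a, r) \<Rightarrow> (case prod_decode r of (b, c) \<Rightarrow>
      (real a - real b) / (real c + 1)))"

definition left_cut :: "real \<Rightarrow> nat set" where
  "left_cut x = {n. rat_code n < x}"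

definition turing_le :: "real \<Rightarrow> real \<Rightarrow> bool" where
  "turing_le x y \<longleftrightarrow> turing_le_set (left_cut x) (left_cut y)"

definition turing_equiv :: "real \<Rightarrow> real \<Rightarrow> bool" where
  "turing_equiv x y \<longleftrightarrow> turing_le x y \<and> turing_le y x"

definition turing_degree :: "real \<Rightarrow> real set" where
  "turing_degree x = {y. turing_equiv y x}"

definition degree_le :: "real set \<Rightarrow> real set \<Rightarrow> bool" where
  "degree_le d e \<longleftrightarrow> (\<exists>x\<in>d. \<exists>y\<in>e. turing_le x y)"

definition reals_below :: "real set set \<Rightarrow> real set" where
  "reals_below C = {x. \<exists>d\<in>C. \<exists>y\<in>d. turing_le x y}"

definition closed_turing_equiv :: "real set \<Rightarrow> bool" where
  "closed_turing_equiv F \<longleftrightarrow> (\<forall>x\<in>F. \<forall>y. turing_equiv y x \<longrightarrow> y \<in> F)"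

definition is_subfield :: "real set \<Rightarrow> bool" where
  "is_subfield F \<longleftrightarrow> 0 \<in> F \<and> 1 \<in> F \<and> (\<forall>x\<in>F. \<forall>y\<in>F. x + y \<in> F \<and> x * y \<in> F)
     \<and> (\<forall>x\<in>F. - x \<in> F) \<and> (\<forall>x\<in>F. x \<noteq> 0 \<longrightarrow> inverse x \<in> F)"

end

(* Enumerating a countable set of reals that is directed and downward closed under
   Turing reducibility, and taking successive upper bounds, gives a cofinal chain; the
   degrees of its members form the required chain C.  A Turing-closed subfield F is
   downward closed and directed because sets of naturals can be coded additively: S is
   Turing equivalent to its code, the sum of 4^-(n+1) over n in S (the digits of the code
   are read off by rational probes; conversely its left cut is decided by comparing with
   base-4 prefixes), and disjoint unions go to sums of codes.  If X is reducible to Y, the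
   codes of Y (+) X and Y (+) {} have the degree of Y, so lie in F, hence so does their
   difference, the code of {} (+) X, which has the degree of X.  The code of the upper
   bound X (+) Y is the sum of the codes of X (+) {} and {} (+) Y. *)

theory Submission
  imports Defs "HOL-Library.Indicator_Function"
begin

section \<open>Closure properties of relative recursiveness\<close>

lemma rec_in_ext: "rec_in g n f \<Longrightarrow> (\<And>xs. length xs = n \<Longrightarrow> f xs = f' xs) \<Longrightarrow> rec_in g n f'"
  using r_ext by blast

lemma rec_in_unary_nth: "rec_in g 1 (\<lambda>xs. h (hd xs)) \<Longrightarrow> rec_in g 1 (\<lambda>xs. h (xs ! 0))"
  by (erule rec_in_ext) (auto simp: length_Suc_conv)

lemma rec_in_compose1:
  assumes "rec_in g 1 (\<lambda>ys. h (ys ! 0))" and "rec_in g n f"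
  shows "rec_in g n (\<lambda>xs. h (f xs))"
  using r_comp[of g 1 "\<lambda>ys. h (ys ! 0)" "[f]" n] assms by simp

lemma rec_in_compose2:
  assumes "rec_in g 2 (\<lambda>ys. h (ys ! 0) (ys ! 1))" and "rec_in g n f1" and "rec_in g n f2"
  shows "rec_in g n (\<lambda>xs. h (f1 xs) (f2 xs))"
  using r_comp[of g 2 "\<lambda>ys. h (ys ! 0) (ys ! 1)" "[f1, f2]" n] assms by simp

lemma rec_in_Suc: "rec_in g n f \<Longrightarrow> rec_in g n (\<lambda>xs. Suc (f xs))"
  using rec_in_compose1[OF rec_in_unary_nth[OF r_succ]] .

lemma rec_in_oracle: "rec_in g n f \<Longrightarrow> rec_in g n (\<lambda>xs. g (f xs))"
  using rec_in_compose1[OF rec_in_unary_nth[OF r_oracle]] .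

lemma rec_in_const: "rec_in g n (\<lambda>_. c)"
proof (induction c)
  case (Suc c)
  then show ?case by (rule rec_in_Suc)
qed (rule r_zero)

lemma rec_in_rec_nat:
  assumes "rec_in g 2 (\<lambda>ys. s (ys ! 0) (ys ! 1))"
  shows "rec_in g 1 (\<lambda>xs. rec_nat c s (xs ! 0))"
proof -
  have "rec_in g 1 (\<lambda>xs. rec_nat c s (hd xs))"
    using r_prim[of g 0 "\<lambda>_. c" "\<lambda>ys. s (ys ! 0) (ys ! 1)"] assms
    by (simp add: rec_in_const numeral_2_eq_2)
  then show ?thesis
    by (rule rec_in_ext) (auto simp: length_Suc_conv)
qed

lemma rec_in_rec_nat_param:
  assumes "rec_in g 1 (\<lambda>ys. b (ys ! 0))" and "rec_in g 3 (\<lambda>ys. s (ys ! 0) (ys ! 1) (ys ! 2))"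
  shows "rec_in g 2 (\<lambda>xs. rec_nat (b (xs ! 1)) (\<lambda>k acc. s k acc (xs ! 1)) (xs ! 0))"
proof -
  have "rec_in g 2 (\<lambda>xs. rec_nat (b (tl xs ! 0)) (\<lambda>k acc. s k acc (tl xs ! 0)) (hd xs))"
    using r_prim[of g 1 "\<lambda>ys. b (ys ! 0)" "\<lambda>ys. s (ys ! 0) (ys ! 1) (ys ! 2)"] assms
    by (simp add: numeral_2_eq_2 numeral_3_eq_3)
  then show ?thesis
    by (rule rec_in_ext) (auto simp: numeral_2_eq_2 length_Suc_conv)
qed

lemma rec_in_change_oracle:
  "rec_in g n f \<Longrightarrow> rec_in h 1 (\<lambda>xs. g (hd xs)) \<Longrightarrow> rec_in h n f"
proof (induction rule: rec_in.induct)
  case r_succ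
  then show ?case using rec_in.r_succ[of h] by simp
next
  case (r_comp m h' fs n)
  then show ?case by (auto intro: rec_in.r_comp)
qed (auto intro: rec_in.intros)

lemma rec_in_add:
  assumes "rec_in g n f1" and "rec_in g n f2"
  shows "rec_in g n (\<lambda>xs. f1 xs + f2 xs)"
proof -
  have "rec_in g 2 (\<lambda>ys. rec_nat (ys ! 1) (\<lambda>k acc. Suc acc) (ys ! 0))"
    using rec_in_rec_nat_param[of g "\<lambda>y. y" "\<lambda>k acc y. Suc acc"] by (simp add: r_proj rec_in_Suc)
  moreover have "rec_nat y (\<lambda>k acc. Suc acc) x = x + y" for x y :: nat
    by (induction x) auto
  ultimately show ?thesis
    using rec_in_compose2[OF _ assms] by simp
qed

lemma rec_in_mult:
  assumes "rec_in g n f1" and "rec_in g n f2"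
  shows "rec_in g n (\<lambda>xs. f1 xs * f2 xs)"
proof -
  have "rec_in g 2 (\<lambda>ys. rec_nat 0 (\<lambda>k acc. acc + ys ! 1) (ys ! 0))"
    using rec_in_rec_nat_param[of g "\<lambda>y. 0" "\<lambda>k acc y. acc + y"]
    by (simp add: r_proj rec_in_add rec_in_const)
  moreover have "rec_nat 0 (\<lambda>k acc. acc + y) x = x * y" for x y :: nat
    by (induction x) auto
  ultimately show ?thesis
    using rec_in_compose2[OF _ assms] by simp
qed

lemma rec_in_pred:
  assumes "rec_in g n f"
  shows "rec_in g n (\<lambda>xs. f xs - 1)"
proof -
  have "rec_in g 1 (\<lambda>ys. rec_nat 0 (\<lambda>k acc. k) (ys ! 0))"
    by (rule rec_in_rec_nat) (simp add: r_proj)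
  moreover have "rec_nat 0 (\<lambda>k acc. k) x = x - 1" for x :: nat
    by (cases x) auto
  ultimately show ?thesis
    using rec_in_compose1[OF _ assms] by simp
qed

lemma rec_in_diff:
  assumes "rec_in g n f1" and "rec_in g n f2"
  shows "rec_in g n (\<lambda>xs. f1 xs - f2 xs)"
proof -
  have "rec_in g 3 (\<lambda>ys. ys ! 1 - 1)"
    by (intro rec_in_pred r_proj) simp
  then have "rec_in g 2 (\<lambda>ys. rec_nat (ys ! 1) (\<lambda>k acc. acc - 1) (ys ! 0))"
    using rec_in_rec_nat_param[of g "\<lambda>y. y" "\<lambda>k acc y. acc - 1"] by (simp add: r_proj)
  moreover have "rec_nat y (\<lambda>k acc. acc - 1) x = y - x" for x y :: nat
    by (induction x) auto
  ultimately show ?thesis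
    using rec_in_compose2[OF _ assms(2,1)] by simp
qed

lemma rec_in_power:
  assumes "rec_in g n f"
  shows "rec_in g n (\<lambda>xs. c ^ f xs)"
proof -
  have "rec_in g 1 (\<lambda>ys. rec_nat 1 (\<lambda>k acc. c * acc) (ys ! 0))"
    by (rule rec_in_rec_nat) (simp add: r_proj rec_in_mult rec_in_const)
  moreover have "rec_nat 1 (\<lambda>k acc. c * acc) x = c ^ x" for x :: nat
    by (induction x) auto
  ultimately show ?thesis
    using rec_in_compose1[OF _ assms] by simp
qed

lemma rec_in_triangle:
  assumes "rec_in g n f"
  shows "rec_in g n (\<lambda>xs. triangle (f xs))"
proof -
  have "rec_in g 1 (\<lambda>ys. rec_nat 0 (\<lambda>k acc. acc + Suc k) (ys ! 0))"
    by (rule rec_in_rec_nat) (simp add: r_proj rec_in_add rec_in_Suc)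
  moreover have "rec_nat 0 (\<lambda>k acc. acc + Suc k) x = triangle x" for x :: nat
    by (induction x) auto
  ultimately show ?thesis
    using rec_in_compose1[OF _ assms] by simp
qed

lemma rec_in_prod_encode:
  "rec_in g n f1 \<Longrightarrow> rec_in g n f2 \<Longrightarrow> rec_in g n (\<lambda>xs. prod_encode (f1 xs, f2 xs))"
  unfolding prod_encode_def by (simp add: rec_in_add rec_in_triangle)

lemma rec_in_less:
  assumes "rec_in g n f1" and "rec_in g n f2"
  shows "rec_in g n (\<lambda>xs. of_bool (f1 xs < f2 xs))"
proof -
  have "rec_in g n (\<lambda>xs. 1 - (1 - (f2 xs - f1 xs)))"
    by (intro rec_in_diff rec_in_const assms)
  then show ?thesis
    by (rule rec_in_ext) auto
qed

lemma rec_in_not: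
  assumes "rec_in g n (\<lambda>xs. of_bool (P xs))"
  shows "rec_in g n (\<lambda>xs. of_bool (\<not> P xs))"
proof -
  have "rec_in g n (\<lambda>xs. 1 - of_bool (P xs))"
    by (intro rec_in_diff rec_in_const assms)
  then show ?thesis
    by (rule rec_in_ext) auto
qed

lemma rec_in_conj:
  assumes "rec_in g n (\<lambda>xs. of_bool (P xs))" and "rec_in g n (\<lambda>xs. of_bool (Q xs))"
  shows "rec_in g n (\<lambda>xs. of_bool (P xs \<and> Q xs))"
  using rec_in_mult[OF assms] by (simp add: of_bool_conj)

lemma rec_in_disj:
  assumes "rec_in g n (\<lambda>xs. of_bool (P xs))" and "rec_in g n (\<lambda>xs. of_bool (Q xs))"
  shows "rec_in g n (\<lambda>xs. of_bool (P xs \<or> Q xs))"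
  using rec_in_not[OF rec_in_conj[OF rec_in_not[OF assms(1)] rec_in_not[OF assms(2)]]] by simp

lemma rec_in_le:
  assumes "rec_in g n f1" and "rec_in g n f2"
  shows "rec_in g n (\<lambda>xs. of_bool (f1 xs \<le> f2 xs))"
proof -
  have "rec_in g n (\<lambda>xs. of_bool (\<not> f2 xs < f1 xs))"
    by (intro rec_in_not rec_in_less assms)
  then show ?thesis by (simp add: not_less)
qed

lemma rec_in_eq:
  assumes "rec_in g n f1" and "rec_in g n f2"
  shows "rec_in g n (\<lambda>xs. of_bool (f1 xs = f2 xs))"
proof -
  have "rec_in g n (\<lambda>xs. of_bool (f1 xs \<le> f2 xs \<and> f2 xs \<le> f1 xs))"
    by (intro rec_in_conj rec_in_le assms)
  then show ?thesis
    by (rule rec_in_ext) auto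
qed

lemma rec_in_if:
  assumes "rec_in g n (\<lambda>xs. of_bool (P xs))" and "rec_in g n f1" and "rec_in g n f2"
  shows "rec_in g n (\<lambda>xs. if P xs then f1 xs else f2 xs)"
proof -
  have "rec_in g n (\<lambda>xs. of_bool (P xs) * f1 xs + of_bool (\<not> P xs) * f2 xs)"
    by (intro rec_in_add rec_in_mult rec_in_not assms)
  then show ?thesis
    by (rule rec_in_ext) auto
qed

lemma rec_in_Least:
  assumes "rec_in g 2 (\<lambda>ys. of_bool (P (ys ! 0) (ys ! 1)))" and "\<And>m. \<exists>k. P k m"
  shows "rec_in g 1 (\<lambda>ys. LEAST k. P k (ys ! 0))"
proof -
  have "rec_in g (Suc 1) (\<lambda>ys. of_bool (\<not> P (ys ! 0) (ys ! 1)))"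
    using rec_in_not[OF assms(1)] by (simp add: numeral_2_eq_2)
  from r_min[OF this] show ?thesis
    using assms(2) by (auto elim: rec_in_ext)
qed

lemma rec_in_Least_compose:
  assumes "rec_in g 2 (\<lambda>ys. of_bool (P (ys ! 0) (ys ! 1)))" and "\<And>m. \<exists>k. P k m"
    and "rec_in g n f"
  shows "rec_in g n (\<lambda>xs. LEAST k. P k (f xs))"
  using rec_in_compose1[OF rec_in_Least[OF assms(1,2)] assms(3)] .

lemma rec_in_div2:
  assumes "rec_in g n f"
  shows "rec_in g n (\<lambda>xs. f xs div 2)"
proof -
  have "rec_in g 2 (\<lambda>ys. of_bool (ys ! 1 < 2 * Suc (ys ! 0)))"
    by (intro rec_in_less rec_in_mult rec_in_const rec_in_Suc r_proj) simp_all
  moreover have "\<exists>d. m < 2 * Suc d" for m :: nat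
    by (rule exI[of _ m]) simp
  ultimately have "rec_in g n (\<lambda>xs. LEAST d. f xs < 2 * Suc d)"
    using assms by (rule rec_in_Least_compose[where P = "\<lambda>d m. m < 2 * Suc d"])
  moreover have "(LEAST d. m < 2 * Suc d) = m div 2" for m :: nat
    by (rule Least_equality) auto
  ultimately show ?thesis
    by simp
qed

lemma rec_in_even:
  assumes "rec_in g n f"
  shows "rec_in g n (\<lambda>xs. of_bool (even (f xs)))"
proof -
  have "rec_in g n (\<lambda>xs. of_bool (f xs = 2 * (f xs div 2)))"
    by (intro rec_in_eq rec_in_mult rec_in_const rec_in_div2 assms)
  moreover have "(of_bool (m = 2 * (m div 2)) :: nat) = of_bool (even m)" for m :: nat
    by (cases "even m") (auto elim: oddE)
  ultimately show ?thesis
    by (simp only:)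
qed

definition triangle_root :: "nat \<Rightarrow> nat" where
  "triangle_root m = (LEAST k. m < triangle (Suc k))"

lemma less_triangle_Suc: "m < triangle (Suc m)"
  by (induction m) auto

lemma triangle_root_bounds: "triangle (triangle_root m) \<le> m" "m < triangle (Suc (triangle_root m))"
proof -
  show "m < triangle (Suc (triangle_root m))"
    unfolding triangle_root_def by (rule LeastI[of _ m]) (rule less_triangle_Suc)
  show "triangle (triangle_root m) \<le> m"
  proof (cases "triangle_root m")
    case (Suc j)
    then have "\<not> m < triangle (Suc j)"
      unfolding triangle_root_def by (metis lessI not_less_Least)
    then show ?thesis using Suc by simp
  qed simp
qed

lemma prod_decode_triangle_root:
  "prod_decode m = (m - triangle (triangle_root m), triangle_root m - (m - triangle (triangle_root m)))"
proof -
  have "prod_encode (m - triangle (triangle_root m), triangle_root m - (m - triangle (triangle_root m))) = m"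
    using triangle_root_bounds[of m] by (simp add: prod_encode_def)
  then show ?thesis by (metis prod_encode_inverse)
qed

lemma rec_in_triangle_root:
  assumes "rec_in g n f"
  shows "rec_in g n (\<lambda>xs. triangle_root (f xs))"
proof -
  have "rec_in g 2 (\<lambda>ys. of_bool (ys ! 1 < triangle (Suc (ys ! 0))))"
    by (intro rec_in_less rec_in_triangle rec_in_Suc r_proj) simp_all
  moreover have "\<exists>k. m < triangle (Suc k)" for m
    using less_triangle_Suc by blast
  ultimately show ?thesis
    unfolding triangle_root_def using assms
    by (rule rec_in_Least_compose[where P = "\<lambda>k m. m < triangle (Suc k)"])
qed

lemma rec_in_prod_decode:
  assumes "rec_in g n f"
  shows "rec_in g n (\<lambda>xs. fst (prod_decode (f xs)))" "rec_in g n (\<lambda>xs. snd (prod_decode (f xs)))"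
  by (simp_all add: prod_decode_triangle_root rec_in_diff rec_in_triangle rec_in_triangle_root assms)

lemma turing_le_set_iff_rec_in:
  "turing_le_set A B \<longleftrightarrow> rec_in (indicator B) 1 (\<lambda>ys. indicator A (ys ! 0))"
  unfolding turing_le_set_def indicator_def
  by (rule iffI; erule rec_in_ext) (auto simp: length_Suc_conv)

lemma turing_le_set_refl: "turing_le_set A A"
  unfolding turing_le_set_def by (rule r_oracle)

lemma turing_le_set_trans: "turing_le_set A B \<Longrightarrow> turing_le_set B C \<Longrightarrow> turing_le_set A C"
  unfolding turing_le_set_def by (rule rec_in_change_oracle)

lemma rec_in_indicator_reduce:
  "turing_le_set A B \<Longrightarrow> rec_in (indicator B) n f
    \<Longrightarrow> rec_in (indicator B) n (\<lambda>xs. indicator A (f xs))"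
  unfolding turing_le_set_iff_rec_in by (rule rec_in_compose1)

lemma empty_turing_le_set: "turing_le_set {} B"
  unfolding turing_le_set_iff_rec_in by (simp add: rec_in_const)

definition set_join :: "nat set \<Rightarrow> nat set \<Rightarrow> nat set" where
  "set_join X Y = {k. if even k then k div 2 \<in> X else k div 2 \<in> Y}"

lemma set_join_turing_le_set:
  assumes "turing_le_set X Z" and "turing_le_set Y Z"
  shows "turing_le_set (set_join X Y) Z"
proof -
  have half: "rec_in (indicator Z) 1 (\<lambda>ys. ys ! 0 div 2)"
    by (intro rec_in_div2 r_proj) simp
  have "rec_in (indicator Z) 1 (\<lambda>ys. if even (ys ! 0)
      then indicator X (ys ! 0 div 2) else indicator Y (ys ! 0 div 2))"
    by (intro rec_in_if rec_in_even r_proj rec_in_indicator_reduce[OF _ half] assms) simp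
  then show ?thesis
    unfolding turing_le_set_iff_rec_in by (rule rec_in_ext) (simp add: set_join_def indicator_def)
qed

lemma turing_le_set_join_left: "turing_le_set X (set_join X Y)"
proof -
  have "rec_in (indicator (set_join X Y)) 1 (\<lambda>ys. indicator (set_join X Y) (2 * ys ! 0))"
    by (intro rec_in_oracle rec_in_mult rec_in_const r_proj) simp
  then show ?thesis
    unfolding turing_le_set_iff_rec_in by (rule rec_in_ext) (auto simp: set_join_def indicator_def)
qed

lemma turing_le_set_join_right: "turing_le_set Y (set_join X Y)"
proof -
  have "rec_in (indicator (set_join X Y)) 1 (\<lambda>ys. indicator (set_join X Y) (Suc (2 * ys ! 0)))"
    by (intro rec_in_oracle rec_in_Suc rec_in_mult rec_in_const r_proj) simp
  then show ?thesis
    unfolding turing_le_set_iff_rec_in by (rule rec_in_ext) (auto simp: set_join_def indicator_def)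
qed

section \<open>Base-4 coding of sets of naturals by reals\<close>

definition base4_code :: "nat set \<Rightarrow> real" where
  "base4_code S = (\<Sum>n. indicator S n * (1/4) ^ Suc n)"

primrec base4_prefix :: "nat set \<Rightarrow> nat \<Rightarrow> nat" where
  "base4_prefix S 0 = 0"
| "base4_prefix S (Suc k) = 4 * base4_prefix S k + indicator S k"

lemma sums_quarter_powers: "(\<lambda>n. (1/4::real) ^ Suc (n + k)) sums ((1/4) ^ k / 3)"
proof -
  have "(\<lambda>n. (1/4::real) ^ Suc k * (1/4) ^ n) sums ((1/4) ^ Suc k * (1 / (1 - 1/4)))"
    by (intro sums_mult geometric_sums) simp
  then show ?thesis
    by (simp add: power_add mult.commute)
qed

lemma base4_code_tail_bounds:
  shows "summable (\<lambda>n. indicator S (n + k) * (1/4::real) ^ Suc (n + k))"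
    and "0 \<le> (\<Sum>n. indicator S (n + k) * (1/4::real) ^ Suc (n + k))"
    and "(\<Sum>n. indicator S (n + k) * (1/4::real) ^ Suc (n + k)) \<le> (1/4) ^ k / 3"
proof -
  have le: "indicator S (n + k) * (1/4::real) ^ Suc (n + k) \<le> (1/4) ^ Suc (n + k)" for n
    by (cases "n + k \<in> S") simp_all
  show summable: "summable (\<lambda>n. indicator S (n + k) * (1/4::real) ^ Suc (n + k))"
    by (rule summable_comparison_test[OF _ sums_summable[OF sums_quarter_powers[of k]]]) (use le in simp)
  show "0 \<le> (\<Sum>n. indicator S (n + k) * (1/4::real) ^ Suc (n + k))"
    by (rule suminf_nonneg[OF summable]) simp
  have "(\<Sum>n. indicator S (n + k) * (1/4::real) ^ Suc (n + k)) \<le> (\<Sum>n. (1/4) ^ Suc (n + k))"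
    by (rule suminf_le[OF le summable sums_summable[OF sums_quarter_powers[of k]]])
  then show "(\<Sum>n. indicator S (n + k) * (1/4::real) ^ Suc (n + k)) \<le> (1/4) ^ k / 3"
    using sums_unique[OF sums_quarter_powers[of k]] by simp
qed

lemma base4_prefix_eq_sum: "real (base4_prefix S k) / 4 ^ k = (\<Sum>n<k. indicator S n * (1/4) ^ Suc n)"
proof (induction k)
  case (Suc k)
  have "real (base4_prefix S (Suc k)) / 4 ^ Suc k = real (base4_prefix S k) / 4 ^ k + indicator S k * (1/4) ^ Suc k"
    by (simp add: field_simps power_one_over indicator_def)
  then show ?case
    using Suc by simp
qed simp

lemma base4_code_split:
  "base4_code S = real (base4_prefix S k) / 4 ^ k + (\<Sum>n. indicator S (n + k) * (1/4) ^ Suc (n + k))"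
  using suminf_split_initial_segment[OF base4_code_tail_bounds(1)[of S 0], of k]
  unfolding base4_code_def base4_prefix_eq_sum by simp

lemma base4_code_bounds:
  shows "real (base4_prefix S k) / 4 ^ k \<le> base4_code S"
    and "base4_code S \<le> real (base4_prefix S k) / 4 ^ k + (1/4) ^ k / 3"
  using base4_code_split[of S k] base4_code_tail_bounds(2,3)[of S k] by simp_all

lemma base4_code_disjoint_Un:
  assumes "A \<inter> B = {}"
  shows "base4_code (A \<union> B) = base4_code A + base4_code B"
proof -
  have "indicator (A \<union> B) n * (1/4::real) ^ Suc n
      = indicator A n * (1/4) ^ Suc n + indicator B n * (1/4) ^ Suc n" for n
    using assms by (auto simp: indicator_def)
  then show ?thesis
    unfolding base4_code_def
    using suminf_add[OF base4_code_tail_bounds(1)[of A 0] base4_code_tail_bounds(1)[of B 0]]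
    by (simp add: add_divide_distrib)
qed

lemma base4_code_set_join:
  "base4_code (set_join X Y) = base4_code (set_join X {}) + base4_code (set_join {} Y)"
proof -
  have "set_join X Y = set_join X {} \<union> set_join {} Y" "set_join X {} \<inter> set_join {} Y = {}"
    by (auto simp: set_join_def)
  then show ?thesis
    by (simp add: base4_code_disjoint_Un)
qed

text \<open>The probe codes the rational (4N + 1/2) / 4^(k+1), where N is the prefix of length k:
  it lies above \<^term>\<open>base4_code S\<close> if digit k is 0 and below it if digit k is 1.\<close>

definition digit_probe :: "nat \<Rightarrow> nat \<Rightarrow> nat" where
  "digit_probe N k = prod_encode (8 * N + 1, prod_encode (0, 2 * 4 ^ Suc k - 1))"

lemma rat_code_digit_probe: "rat_code (digit_probe N k) = real (8 * N + 1) / (2 * 4 ^ Suc k)"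
proof -
  have "(1::nat) \<le> 2 * 4 ^ Suc k"
    by simp
  then have "real (2 * 4 ^ Suc k - 1) + 1 = 2 * 4 ^ Suc k"
    by (simp add: of_nat_diff)
  then show ?thesis
    unfolding rat_code_def digit_probe_def by simp
qed

lemma digit_probe_mem_left_cut_iff:
  "digit_probe (base4_prefix S k) k \<in> left_cut (base4_code S) \<longleftrightarrow> k \<in> S"
proof -
  define N where "N = base4_prefix S k"
  define v :: real where "v = 4 ^ Suc k"
  have "v > 0"
    by (simp add: v_def)
  have lower: "real (base4_prefix S (Suc k)) / v \<le> base4_code S"
    unfolding v_def by (rule base4_code_bounds(1))
  have upper: "base4_code S \<le> real (base4_prefix S (Suc k)) / v + 1 / (3 * v)"
    using base4_code_bounds(2)[of S "Suc k"] by (simp add: v_def power_one_over)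
  have probe: "rat_code (digit_probe N k) = real (8 * N + 1) / (2 * v)"
    unfolding v_def by (rule rat_code_digit_probe)
  show ?thesis
  proof (cases "k \<in> S")
    case True
    then have "real (4 * N + 1) / v \<le> base4_code S"
      using lower by (simp add: N_def)
    moreover have "real (8 * N + 1) / (2 * v) < real (4 * N + 1) / v"
      using \<open>v > 0\<close> by (simp add: field_simps)
    ultimately show ?thesis
      using True probe by (simp add: left_cut_def N_def)
  next
    case False
    then have "base4_code S \<le> real (4 * N) / v + 1 / (3 * v)"
      using upper by (simp add: N_def)
    moreover have "real (4 * N) / v + 1 / (3 * v) < real (8 * N + 1) / (2 * v)"
      using \<open>v > 0\<close> by (simp add: field_simps)
    ultimately show ?thesis
      using False probe by (simp add: left_cut_def N_def)
  qed
qed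

lemma rec_in_digit_probe:
  "rec_in g n f1 \<Longrightarrow> rec_in g n f2 \<Longrightarrow> rec_in g n (\<lambda>xs. digit_probe (f1 xs) (f2 xs))"
  unfolding digit_probe_def
  by (intro rec_in_prod_encode rec_in_const rec_in_add rec_in_mult rec_in_diff rec_in_power rec_in_Suc)

lemma turing_le_set_left_cut_base4_code: "turing_le_set S (left_cut (base4_code S))"
proof -
  let ?g = "indicator (left_cut (base4_code S)) :: nat \<Rightarrow> nat"
  have prefix: "rec_nat 0 (\<lambda>k acc. 4 * acc + ?g (digit_probe acc k)) k = base4_prefix S k" for k
    by (induction k) (simp_all add: digit_probe_mem_left_cut_iff indicator_def)
  have "rec_in ?g 1 (\<lambda>ys. rec_nat 0 (\<lambda>k acc. 4 * acc + ?g (digit_probe acc k)) (ys ! 0))"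
    by (rule rec_in_rec_nat)
      (intro rec_in_add rec_in_mult rec_in_const rec_in_oracle rec_in_digit_probe r_proj; simp)
  then have prefix_rec: "rec_in ?g 1 (\<lambda>ys. base4_prefix S (ys ! 0))"
    unfolding prefix .
  have "rec_in ?g 1 (\<lambda>ys. ?g (digit_probe (base4_prefix S (ys ! 0)) (ys ! 0)))"
    by (intro rec_in_oracle rec_in_digit_probe prefix_rec r_proj) simp
  then show ?thesis
    unfolding turing_le_set_iff_rec_in by (simp add: digit_probe_mem_left_cut_iff indicator_def)
qed

definition rat_num_pos :: "nat \<Rightarrow> nat" where
  "rat_num_pos m = fst (prod_decode m)"

definition rat_num_neg :: "nat \<Rightarrow> nat" where
  "rat_num_neg m = fst (prod_decode (snd (prod_decode m)))"

definition rat_denom :: "nat \<Rightarrow> nat" where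
  "rat_denom m = Suc (snd (prod_decode (snd (prod_decode m))))"

lemma rat_code_eq_parts: "rat_code m = (real (rat_num_pos m) - real (rat_num_neg m)) / real (rat_denom m)"
  by (simp add: rat_code_def rat_num_pos_def rat_num_neg_def rat_denom_def case_prod_beta)

lemma rat_denom_pos: "0 < rat_denom m"
  by (simp add: rat_denom_def)

lemma rec_in_rat_code_parts:
  assumes "rec_in g n f"
  shows "rec_in g n (\<lambda>xs. rat_num_pos (f xs))"
    and "rec_in g n (\<lambda>xs. rat_num_neg (f xs))"
    and "rec_in g n (\<lambda>xs. rat_denom (f xs))"
  unfolding rat_num_pos_def rat_num_neg_def rat_denom_def
  by (intro rec_in_prod_decode rec_in_Suc assms)+

lemma diff_frac_less_frac_iff_nat:
  assumes "0 < d" and "0 < w"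
  shows "(real p - real q) / real d < real N / real w \<longleftrightarrow> p * w < N * d + q * w"
proof -
  have "(real p - real q) / real d < real N / real w \<longleftrightarrow> real (p * w) < real (N * d + q * w)"
    using assms by (simp add: field_simps)
  then show ?thesis
    by (simp only: of_nat_less_iff)
qed

lemma frac_le_diff_frac_iff_nat:
  assumes "0 < d" and "0 < w"
  shows "real N / real w \<le> (real p - real q) / real d \<longleftrightarrow> N * d + q * w \<le> p * w"
proof -
  have "real N / real w \<le> (real p - real q) / real d \<longleftrightarrow> real (N * d + q * w) \<le> real (p * w)"
    using assms by (simp add: field_simps)
  then show ?thesis
    by (simp only: of_nat_le_iff)
qed

lemma diff_frac_eq_iff_nat:
  assumes "0 < d" and "0 < d'"
  shows "(real p - real q) / real d = (real p' - real q') / real d' \<longleftrightarrow> p * d' + q' * d = p' * d + q * d'"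
proof -
  have "(real p - real q) / real d = (real p' - real q') / real d'
      \<longleftrightarrow> real (p * d' + q' * d) = real (p' * d + q * d')"
    using assms by (simp add: field_simps)
  then show ?thesis
    by (simp only: of_nat_eq_iff)
qed

lemma rec_in_rat_code_less:
  assumes "rec_in g n f" and "rec_in g n N" and "rec_in g n w" and "\<And>xs. 0 < w xs"
  shows "rec_in g n (\<lambda>xs. of_bool (rat_code (f xs) < real (N xs) / real (w xs)))"
proof -
  have "rec_in g n (\<lambda>xs. of_bool
      (rat_num_pos (f xs) * w xs < N xs * rat_denom (f xs) + rat_num_neg (f xs) * w xs))"
    by (intro rec_in_less rec_in_add rec_in_mult rec_in_rat_code_parts assms)
  then show ?thesis
    by (rule rec_in_ext) (simp add: rat_code_eq_parts diff_frac_less_frac_iff_nat[OF rat_denom_pos assms(4)])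
qed

lemma rec_in_rat_code_ge:
  assumes "rec_in g n f" and "rec_in g n N" and "rec_in g n w" and "\<And>xs. 0 < w xs"
  shows "rec_in g n (\<lambda>xs. of_bool (real (N xs) / real (w xs) \<le> rat_code (f xs)))"
proof -
  have "rec_in g n (\<lambda>xs. of_bool
      (N xs * rat_denom (f xs) + rat_num_neg (f xs) * w xs \<le> rat_num_pos (f xs) * w xs))"
    by (intro rec_in_le rec_in_add rec_in_mult rec_in_rat_code_parts assms)
  then show ?thesis
    by (rule rec_in_ext) (simp add: rat_code_eq_parts frac_le_diff_frac_iff_nat[OF rat_denom_pos assms(4)])
qed

lemma rec_in_rat_code_eq:
  assumes "rec_in g n f"
  shows "rec_in g n (\<lambda>xs. of_bool (rat_code (f xs) = rat_code m))"
proof -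
  have "rec_in g n (\<lambda>xs. of_bool (rat_num_pos (f xs) * rat_denom m + rat_num_neg m * rat_denom (f xs)
      = rat_num_pos m * rat_denom (f xs) + rat_num_neg (f xs) * rat_denom m))"
    by (intro rec_in_eq rec_in_add rec_in_mult rec_in_rat_code_parts rec_in_const assms)
  then show ?thesis
    by (rule rec_in_ext) (simp add: rat_code_eq_parts diff_frac_eq_iff_nat[OF rat_denom_pos rat_denom_pos])
qed

lemma rec_in_base4_prefix:
  assumes "rec_in (indicator S) n f"
  shows "rec_in (indicator S) n (\<lambda>xs. base4_prefix S (f xs))"
proof -
  have "rec_nat 0 (\<lambda>k acc. 4 * acc + indicator S k) k = base4_prefix S k" for k
    by (induction k) simp_all
  moreover have "rec_in (indicator S) 1 (\<lambda>ys. rec_nat 0 (\<lambda>k acc. 4 * acc + indicator S k) (ys ! 0))"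
    by (rule rec_in_rec_nat) (intro rec_in_add rec_in_mult rec_in_const rec_in_oracle r_proj; simp)
  ultimately show ?thesis
    using rec_in_compose1[OF _ assms] by simp
qed

lemma frac_thirds_eq: "real (3 * N + 1) / real (3 * 4 ^ k) = real N / 4 ^ k + (1/4) ^ k / 3"
  by (simp add: field_simps power_one_over)

lemma base4_code_le_upper: "base4_code S \<le> real (3 * base4_prefix S k + 1) / real (3 * 4 ^ k)"
  using base4_code_bounds(2)[of S k] by (simp only: frac_thirds_eq)

lemma base4_code_separated_by_prefix:
  assumes "q \<noteq> base4_code S"
  shows "\<exists>k. q < real (base4_prefix S k) / real (4 ^ k)
    \<or> real (3 * base4_prefix S k + 1) / real (3 * 4 ^ k) \<le> q"
proof -
  obtain k where k: "(1/4::real) ^ k < \<bar>q - base4_code S\<bar>"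
    using real_arch_pow_inv[of "\<bar>q - base4_code S\<bar>" "1/4"] assms by auto
  have "0 \<le> (1/4::real) ^ k"
    by simp
  then have "q < real (base4_prefix S k) / 4 ^ k \<or> real (base4_prefix S k) / 4 ^ k + (1/4) ^ k / 3 \<le> q"
    using k base4_code_bounds[of S k] by linarith
  then show ?thesis
    unfolding frac_thirds_eq of_nat_power of_nat_numeral by blast
qed

text \<open>When \<^term>\<open>base4_code S\<close> is itself rational, the search for a separating prefix does not
  terminate at that rational, so this one query is answered by a hard-wired constant.\<close>

lemma left_cut_base4_code_turing_le_set: "turing_le_set (left_cut (base4_code S)) S"
proof -
  obtain m0 where m0: "base4_code S \<in> range rat_code \<Longrightarrow> rat_code m0 = base4_code S"
    by (metis imageE)
  define P where "P k m \<longleftrightarrow> rat_code m < real (base4_prefix S k) / real (4 ^ k)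
      \<or> real (3 * base4_prefix S k + 1) / real (3 * 4 ^ k) \<le> rat_code m \<or> rat_code m = rat_code m0"
    for k m
  have P_ex: "\<exists>k. P k m" for m
  proof (cases "rat_code m = base4_code S")
    case True
    then have "rat_code m = rat_code m0"
      using m0 by (metis rangeI)
    then show ?thesis
      unfolding P_def by blast
  qed (use base4_code_separated_by_prefix P_def in blast)
  have "rec_in (indicator S) 2 (\<lambda>ys. of_bool (P (ys ! 0) (ys ! 1)))"
    unfolding P_def
    by (intro rec_in_disj rec_in_rat_code_less rec_in_rat_code_ge rec_in_rat_code_eq
        rec_in_base4_prefix rec_in_power rec_in_mult rec_in_add rec_in_const r_proj) simp_all
  then have search: "rec_in (indicator S) 1 (\<lambda>ys. LEAST k. P k (ys ! 0))"
    using P_ex by (rule rec_in_Least)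
  have "rec_in (indicator S) 1 (\<lambda>ys. if rat_code (ys ! 0) = rat_code m0
      then of_bool (rat_code m0 < base4_code S)
      else of_bool (rat_code (ys ! 0) < real (base4_prefix S (LEAST k. P k (ys ! 0)))
        / real (4 ^ (LEAST k. P k (ys ! 0)))))"
    by (intro rec_in_if rec_in_rat_code_eq rec_in_rat_code_less rec_in_const
        rec_in_base4_prefix rec_in_power search r_proj) simp_all
  moreover have "(if rat_code m = rat_code m0 then of_bool (rat_code m0 < base4_code S)
      else of_bool (rat_code m < real (base4_prefix S (LEAST k. P k m)) / real (4 ^ (LEAST k. P k m))))
      = (indicator (left_cut (base4_code S)) m :: nat)" for m
  proof (cases "rat_code m = rat_code m0")
    case False
    define k where "k = (LEAST k. P k m)"
    have "P k m"
      unfolding k_def using P_ex by (rule LeastI_ex)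
    then have "rat_code m < real (base4_prefix S k) / real (4 ^ k) \<longleftrightarrow> rat_code m < base4_code S"
      using False base4_code_bounds(1)[of S k] base4_code_le_upper[of S k]
      unfolding P_def by auto
    then show ?thesis
      using False by (simp add: k_def left_cut_def indicator_def)
  qed (simp add: left_cut_def indicator_def)
  ultimately show ?thesis
    unfolding turing_le_set_iff_rec_in by simp
qed

lemma turing_le_refl: "turing_le x x"
  unfolding turing_le_def by (rule turing_le_set_refl)

lemma turing_le_trans: "turing_le x y \<Longrightarrow> turing_le y z \<Longrightarrow> turing_le x z"
  unfolding turing_le_def by (rule turing_le_set_trans)

lemma closed_turing_equivD:
  assumes "closed_turing_equiv F" and "y \<in> F"
    and "turing_le_set (left_cut x) (left_cut y)" and "turing_le_set (left_cut y) (left_cut x)"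
  shows "x \<in> F"
  using assms unfolding closed_turing_equiv_def turing_equiv_def turing_le_def by blast

lemma closed_turing_equiv_base4_code:
  assumes "closed_turing_equiv F" and "y \<in> F"
    and "turing_le_set T (left_cut y)" and "turing_le_set (left_cut y) T"
  shows "base4_code T \<in> F"
  using assms turing_le_set_trans left_cut_base4_code_turing_le_set turing_le_set_left_cut_base4_code
  by (metis closed_turing_equivD)

lemma closed_turing_equiv_subfield_downward_closed:
  assumes "is_subfield F" and "closed_turing_equiv F" and "y \<in> F" and "turing_le x y"
  shows "x \<in> F"
proof -
  let ?X = "left_cut x" and ?Y = "left_cut y"
  have "turing_le_set ?X ?Y"
    using assms(4) unfolding turing_le_def .
  then have "base4_code (set_join ?Y ?X) \<in> F"
    by (intro closed_turing_equiv_base4_code[OF assms(2,3)] set_join_turing_le_set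
        turing_le_set_refl turing_le_set_join_left)
  moreover have "base4_code (set_join ?Y {}) \<in> F"
    by (intro closed_turing_equiv_base4_code[OF assms(2,3)] set_join_turing_le_set
        turing_le_set_refl turing_le_set_join_left empty_turing_le_set)
  ultimately have "base4_code (set_join ?Y ?X) + - base4_code (set_join ?Y {}) \<in> F"
    using assms(1) unfolding is_subfield_def by blast
  then have "base4_code (set_join {} ?X) \<in> F"
    using base4_code_set_join[of ?Y ?X] by simp
  then show ?thesis
  proof (rule closed_turing_equivD[OF assms(2)])
    show "turing_le_set ?X (left_cut (base4_code (set_join {} ?X)))"
      using turing_le_set_join_right turing_le_set_left_cut_base4_code by (rule turing_le_set_trans)
    show "turing_le_set (left_cut (base4_code (set_join {} ?X))) ?X"
      using left_cut_base4_code_turing_le_set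
        set_join_turing_le_set[OF empty_turing_le_set turing_le_set_refl]
      by (rule turing_le_set_trans)
  qed
qed

lemma closed_turing_equiv_subfield_directed:
  assumes "is_subfield F" and "closed_turing_equiv F" and "x \<in> F" and "y \<in> F"
  shows "\<exists>z\<in>F. turing_le x z \<and> turing_le y z"
proof -
  let ?X = "left_cut x" and ?Y = "left_cut y"
  have "base4_code (set_join ?X {}) \<in> F"
    by (intro closed_turing_equiv_base4_code[OF assms(2,3)] set_join_turing_le_set
        turing_le_set_refl turing_le_set_join_left empty_turing_le_set)
  moreover have "base4_code (set_join {} ?Y) \<in> F"
    by (intro closed_turing_equiv_base4_code[OF assms(2,4)] set_join_turing_le_set
        turing_le_set_refl turing_le_set_join_right empty_turing_le_set)
  ultimately have "base4_code (set_join ?X ?Y) \<in> F"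
    using assms(1) base4_code_set_join[of ?X ?Y] unfolding is_subfield_def by simp
  moreover have "turing_le x (base4_code (set_join ?X ?Y))" "turing_le y (base4_code (set_join ?X ?Y))"
    unfolding turing_le_def
    by (rule turing_le_set_trans[OF _ turing_le_set_left_cut_base4_code],
        rule turing_le_set_join_left turing_le_set_join_right)+
  ultimately show ?thesis
    by blast
qed

section \<open>Cofinal chains\<close>

lemma countable_directed_cofinal_chain:
  assumes "countable F" and "F \<noteq> {}"
    and refl: "\<And>x. le x x" and trans: "\<And>x y z. le x y \<Longrightarrow> le y z \<Longrightarrow> le x z"
    and directed: "\<And>x y. x \<in> F \<Longrightarrow> y \<in> F \<Longrightarrow> \<exists>z\<in>F. le x z \<and> le y z"
  shows "\<exists>z :: nat \<Rightarrow> 'a. range z \<subseteq> F \<and> (\<forall>i j. i \<le> j \<longrightarrow> le (z i) (z j))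
    \<and> (\<forall>x\<in>F. \<exists>n. le x (z n))"
proof -
  define f where "f = from_nat_into F"
  have f: "f n \<in> F" for n
    unfolding f_def using assms(2) by (rule from_nat_into)
  have range_f: "range f = F"
    unfolding f_def using assms(2,1) by (rule range_from_nat_into)
  obtain ub
    where ub: "\<And>x y. x \<in> F \<Longrightarrow> y \<in> F \<Longrightarrow> ub x y \<in> F \<and> le x (ub x y) \<and> le y (ub x y)"
    using directed by metis
  define z where "z = rec_nat (f 0) (\<lambda>n zn. ub zn (f (Suc n)))"
  have z: "z n \<in> F \<and> le (f n) (z n)" for n
  proof (induction n)
    case 0
    then show ?case by (simp add: z_def f refl)
  next
    case (Suc n)
    then show ?case using ub[of "z n" "f (Suc n)"] f by (simp add: z_def)
  qed
  have step: "le (z n) (z (Suc n))" for n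
    using ub[of "z n" "f (Suc n)"] z f by (simp add: z_def)
  show ?thesis
  proof (intro exI[of _ z] conjI allI impI ballI)
    show "range z \<subseteq> F"
      using z by blast
    show "le (z i) (z j)" if "i \<le> j" for i j
      using that refl trans step by (rule transitive_stepwise_le)
    show "\<exists>n. le x (z n)" if "x \<in> F" for x
      using that z range_f by blast
  qed
qed

lemma closed_turing_equiv_subfield_cofinal_chain:
  assumes "is_subfield F" and "countable F" and "closed_turing_equiv F"
  obtains z :: "nat \<Rightarrow> real"
  where "\<And>i j. i \<le> j \<Longrightarrow> turing_le (z i) (z j)" and "F = {x. \<exists>n. turing_le x (z n)}"
proof -
  have "F \<noteq> {}"
    using assms(1) unfolding is_subfield_def by blast
  have "\<exists>z :: nat \<Rightarrow> real. range z \<subseteq> F \<and> (\<forall>i j. i \<le> j \<longrightarrow> turing_le (z i) (z j))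
      \<and> (\<forall>x\<in>F. \<exists>n. turing_le x (z n))"
  proof (rule countable_directed_cofinal_chain[of F turing_le])
    show "countable F" and "F \<noteq> {}"
      by fact+
    show "turing_le x x" for x
      by (rule turing_le_refl)
    show "turing_le x z" if "turing_le x y" and "turing_le y z" for x y z
      using that by (rule turing_le_trans)
    show "\<exists>z\<in>F. turing_le x z \<and> turing_le y z" if "x \<in> F" and "y \<in> F" for x y
      using assms(1,3) that by (rule closed_turing_equiv_subfield_directed)
  qed
  then obtain z :: "nat \<Rightarrow> real" where "range z \<subseteq> F"
    and "\<forall>i j. i \<le> j \<longrightarrow> turing_le (z i) (z j)" and "\<forall>x\<in>F. \<exists>n. turing_le x (z n)"
    by blast
  moreover have "F = {x. \<exists>n. turing_le x (z n)}"
    using calculation closed_turing_equiv_subfield_downward_closed[OF assms(1,3)] by blast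
  ultimately show ?thesis
    using that by blast
qed

lemma mem_turing_degree_iff: "y \<in> turing_degree x \<longleftrightarrow> turing_le y x \<and> turing_le x y"
  unfolding turing_degree_def turing_equiv_def by simp

lemma degree_le_turing_degree_iff: "degree_le (turing_degree x) (turing_degree y) \<longleftrightarrow> turing_le x y"
  unfolding degree_le_def Bex_def mem_turing_degree_iff
  by (meson turing_le_refl turing_le_trans)

lemma reals_below_image_turing_degree: "reals_below (turing_degree ` A) = {x. \<exists>y\<in>A. turing_le x y}"
proof -
  have "(\<exists>z\<in>turing_degree y. turing_le x z) \<longleftrightarrow> turing_le x y" for x y
    unfolding Bex_def mem_turing_degree_iff by (meson turing_le_refl turing_le_trans)
  then show ?thesis
    unfolding reals_below_def by auto
qed

lemma linear_degree_le_image_turing_degree: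
  assumes "\<And>x y. x \<in> A \<Longrightarrow> y \<in> A \<Longrightarrow> turing_le x y \<or> turing_le y x"
  shows "\<forall>d\<in>turing_degree ` A. \<forall>e\<in>turing_degree ` A. degree_le d e \<or> degree_le e d"
  using assms by (auto simp: degree_le_turing_degree_iff)

theorem mainTheorem19:
  fixes F :: "real set"
  assumes "is_subfield F" and "countable F" and "closed_turing_equiv F"
  shows "\<exists>C :: real set set. C \<subseteq> range turing_degree
           \<and> (\<forall>d\<in>C. \<forall>e\<in>C. degree_le d e \<or> degree_le e d)
           \<and> F = reals_below C"
proof -
  obtain z :: "nat \<Rightarrow> real" where mono: "\<And>i j. i \<le> j \<Longrightarrow> turing_le (z i) (z j)"
    and F: "F = {x. \<exists>n. turing_le x (z n)}"
    using closed_turing_equiv_subfield_cofinal_chain[OF assms] by blast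
  show ?thesis
  proof (intro exI[of _ "turing_degree ` range z"] conjI)
    show "turing_degree ` range z \<subseteq> range turing_degree"
      by blast
    show "\<forall>d\<in>turing_degree ` range z. \<forall>e\<in>turing_degree ` range z. degree_le d e \<or> degree_le e d"
      using mono nat_le_linear by (intro linear_degree_le_image_turing_degree) blast
    show "F = reals_below (turing_degree ` range z)"
      unfolding F reals_below_image_turing_degree by blast
  qed
qed

end
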